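(* Let $\mu$ be a joint distribution of a triple $(X,A,Y)$ with $X\in\mathcal{X}\subseteq\mathbb{R}^d$, $A\in\{0,1\}$ with $\Pr(A=0),\Pr(A=1)>0$, and $Y\in[-1,1]$. Let $h:\mathcal{X}\to\mathbb{R}$ be measurable and $\widehat{Y}=h(X)$. If $\widehat{Y}$ is statistically independent of $A$, then $$\varepsilon_{1,\mu_0}(\widehat{Y})+\varepsilon_{1,\mu_1}(\widehat{Y})\geq|\mathbb{E}_{\mu_0}[Y]-\mathbb{E}_{\mu_1}[Y]|$$ and $$\varepsilon^2_{2,\mu_0}(\widehat{Y})+\varepsilon^2_{2,\mu_1}(\widehat{Y})\geq\tfrac{1}{2}|\mathbb{E}_{\mu_0}[Y]-\mathbb{E}_{\mu_1}[Y]|^2.$$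
   Context: For $a\in\{0,1\}$, $\mu_a$ is the conditional distribution of $(X,Y)$ given $A=a$. For a distribution $\nu$ and $p\ge1$, $\varepsilon_{p,\nu}(\widehat{Y}):=\left(\mathbb{E}_\nu[|\widehat{Y}-Y|^p]\right)^{1/p}$. *)

theory Defs
  imports "HOL-Probability.Probability"
begin

definition cond_dist ::
  "'w measure \<Rightarrow> ('w \<Rightarrow> 'x::topological_space) \<Rightarrow> ('w \<Rightarrow> real) \<Rightarrow> ('w \<Rightarrow> real) \<Rightarrow> real
     \<Rightarrow> ('x \<times> real) measure" where
  "cond_dist M X A Y a =
     distr (uniform_measure M {w \<in> space M. A w = a}) (borel \<Otimes>\<^sub>M borel) (\<lambda>w. (X w, Y w))"

definition err :: "real \<Rightarrow> ('x \<times> real) measure \<Rightarrow> ('x \<Rightarrow> real) \<Rightarrow> ennreal" where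
  "err p \<nu> h =
     (let I = (\<integral>\<^sup>+ z. ennreal (\<bar>h (fst z) - snd z\<bar> powr p) \<partial>\<nu>)
      in if I = \<infinity> then \<infinity> else ennreal (enn2real I powr (1 / p)))"

end

theory Submission
  imports Defs
begin

text \<open>
  Since the prediction h(X) is independent of A, conditioning on an event {A = a} of positive
  probability leaves its law unchanged, so h(X) has one and the same mean c under both
  conditional distributions. By Jensen's inequality the distance from E[Y] to c under each
  conditional distribution is at most its L1 error, and its square at most its squared L2 error;
  the triangle inequality and (u - v)^2 \<le> 2 (u^2 + v^2) then give the two bounds.
\<close>

lemma err_cases:
  fixes \<nu> :: "('x \<times> real) measure" and h :: "'x \<Rightarrow> real"
  assumes "(\<lambda>z. h (fst z) - snd z) \<in> borel_measurable \<nu>"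
  obtains "err p \<nu> h = \<infinity>"
  | "integrable \<nu> (\<lambda>z. \<bar>h (fst z) - snd z\<bar> powr p)"
    "err p \<nu> h = ennreal ((\<integral>z. \<bar>h (fst z) - snd z\<bar> powr p \<partial>\<nu>) powr (1 / p))"
proof (cases "(\<integral>\<^sup>+z. ennreal (\<bar>h (fst z) - snd z\<bar> powr p) \<partial>\<nu>) = \<infinity>")
  case True
  then show ?thesis using that(1) by (simp add: err_def)
next
  case False
  then have int: "integrable \<nu> (\<lambda>z. \<bar>h (fst z) - snd z\<bar> powr p)"
    using assms by (simp add: integrable_iff_bounded less_top)
  then have "(\<integral>\<^sup>+z. ennreal (\<bar>h (fst z) - snd z\<bar> powr p) \<partial>\<nu>)
      = ennreal (\<integral>z. \<bar>h (fst z) - snd z\<bar> powr p \<partial>\<nu>)"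
    by (intro nn_integral_eq_integral) auto
  then show ?thesis
    using that(2)[OF int] False by (simp add: err_def integral_nonneg_AE)
qed

lemma abs_mean_gap_le_err_1:
  fixes \<nu> :: "('x \<times> real) measure" and h :: "'x \<Rightarrow> real"
  assumes "integrable \<nu> snd" and "(\<lambda>z. h (fst z)) \<in> borel_measurable \<nu>"
  shows "ennreal \<bar>(\<integral>z. snd z \<partial>\<nu>) - (\<integral>z. h (fst z) \<partial>\<nu>)\<bar> \<le> err 1 \<nu> h"
proof -
  let ?f = "\<lambda>z. h (fst z) - snd z"
  have f_meas: "?f \<in> borel_measurable \<nu>"
    using assms by measurable
  show ?thesis
  proof (cases rule: err_cases[OF f_meas, of 1])
    case 1
    then show ?thesis by simp
  next
    case 2
    then have "integrable \<nu> ?f"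
      using integrable_abs_iff[OF f_meas] by simp
    from Bochner_Integration.integrable_add[OF this assms(1)]
    have "integrable \<nu> (\<lambda>z. h (fst z))" by simp
    then have "\<bar>(\<integral>z. snd z \<partial>\<nu>) - (\<integral>z. h (fst z) \<partial>\<nu>)\<bar> = \<bar>\<integral>z. ?f z \<partial>\<nu>\<bar>"
      using assms(1) by simp
    also have "\<dots> \<le> (\<integral>z. \<bar>?f z\<bar> \<partial>\<nu>)"
      by (rule integral_abs_bound)
    finally show ?thesis
      using 2 by (simp add: ennreal_leI)
  qed
qed

lemma sq_mean_gap_le_err_2:
  fixes \<nu> :: "('x \<times> real) measure" and h :: "'x \<Rightarrow> real"
  assumes "prob_space \<nu>" and "integrable \<nu> snd" and "(\<lambda>z. h (fst z)) \<in> borel_measurable \<nu>"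
  shows "ennreal (((\<integral>z. snd z \<partial>\<nu>) - (\<integral>z. h (fst z) \<partial>\<nu>))\<^sup>2) \<le> (err 2 \<nu> h)\<^sup>2"
proof -
  interpret prob_space \<nu> by fact
  let ?f = "\<lambda>z. h (fst z) - snd z"
  have f_meas: "?f \<in> borel_measurable \<nu>"
    using assms(2,3) by measurable
  show ?thesis
  proof (cases rule: err_cases[OF f_meas, of 2])
    case 1
    then show ?thesis by simp
  next
    case 2
    then have sq_int: "integrable \<nu> (\<lambda>z. (?f z)\<^sup>2)"
      by simp
    then have "integrable \<nu> ?f"
      using f_meas by (blast dest: square_integrable_imp_integrable)
    from Bochner_Integration.integrable_add[OF this assms(2)]
    have "integrable \<nu> (\<lambda>z. h (fst z))" by simp
    then have "((\<integral>z. snd z \<partial>\<nu>) - (\<integral>z. h (fst z) \<partial>\<nu>))\<^sup>2 = (\<integral>z. ?f z \<partial>\<nu>)\<^sup>2"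
      using assms(2) by (simp add: power2_commute)
    also have "\<dots> \<le> (\<integral>z. (?f z)\<^sup>2 \<partial>\<nu>)"
      using variance_eq[OF \<open>integrable \<nu> ?f\<close> sq_int] variance_positive[of ?f] by simp
    finally have "ennreal (((\<integral>z. snd z \<partial>\<nu>) - (\<integral>z. h (fst z) \<partial>\<nu>))\<^sup>2)
        \<le> ennreal (\<integral>z. (?f z)\<^sup>2 \<partial>\<nu>)"
      by (rule ennreal_leI)
    moreover have "(err 2 \<nu> h)\<^sup>2 = ennreal (\<integral>z. (?f z)\<^sup>2 \<partial>\<nu>)"
      using 2 by (simp add: ennreal_power powr_half_sqrt integral_nonneg_AE)
    ultimately show ?thesis by simp
  qed
qed

lemma half_sq_diff_le_sum_sq_dist:
  fixes a b c :: real
  shows "1/2 * (a - b)\<^sup>2 \<le> (a - c)\<^sup>2 + (b - c)\<^sup>2"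
proof -
  have "(a - c)\<^sup>2 + (b - c)\<^sup>2 - 1/2 * (a - b)\<^sup>2 = 1/2 * (a + b - 2 * c)\<^sup>2"
    by (simp add: power2_eq_square algebra_simps)
  then show ?thesis
    using zero_le_power2[of "a + b - 2 * c"] by linarith
qed

lemma mean_gap_le_err_sum:
  fixes \<nu>\<^sub>0 \<nu>\<^sub>1 :: "('x \<times> real) measure" and h :: "'x \<Rightarrow> real"
  assumes "prob_space \<nu>\<^sub>0" "integrable \<nu>\<^sub>0 snd" "(\<lambda>z. h (fst z)) \<in> borel_measurable \<nu>\<^sub>0"
    and "prob_space \<nu>\<^sub>1" "integrable \<nu>\<^sub>1 snd" "(\<lambda>z. h (fst z)) \<in> borel_measurable \<nu>\<^sub>1"
    and same_mean: "(\<integral>z. h (fst z) \<partial>\<nu>\<^sub>0) = (\<integral>z. h (fst z) \<partial>\<nu>\<^sub>1)"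
  shows "ennreal \<bar>(\<integral>z. snd z \<partial>\<nu>\<^sub>0) - (\<integral>z. snd z \<partial>\<nu>\<^sub>1)\<bar> \<le> err 1 \<nu>\<^sub>0 h + err 1 \<nu>\<^sub>1 h"
    and "ennreal (1/2 * \<bar>(\<integral>z. snd z \<partial>\<nu>\<^sub>0) - (\<integral>z. snd z \<partial>\<nu>\<^sub>1)\<bar>\<^sup>2)
      \<le> (err 2 \<nu>\<^sub>0 h)\<^sup>2 + (err 2 \<nu>\<^sub>1 h)\<^sup>2"
proof -
  define a b c where "a = (\<integral>z. snd z \<partial>\<nu>\<^sub>0)" and "b = (\<integral>z. snd z \<partial>\<nu>\<^sub>1)"
    and "c = (\<integral>z. h (fst z) \<partial>\<nu>\<^sub>0)"
  have "ennreal \<bar>a - b\<bar> \<le> ennreal (\<bar>a - c\<bar> + \<bar>b - c\<bar>)"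
    by (rule ennreal_leI) linarith
  also have "\<dots> = ennreal \<bar>a - c\<bar> + ennreal \<bar>b - c\<bar>"
    by (simp add: ennreal_plus)
  also have "\<dots> \<le> err 1 \<nu>\<^sub>0 h + err 1 \<nu>\<^sub>1 h"
    using abs_mean_gap_le_err_1[OF assms(2,3)] abs_mean_gap_le_err_1[OF assms(5,6)] same_mean
    unfolding a_def b_def c_def by (intro add_mono) simp_all
  finally show "ennreal \<bar>a - b\<bar> \<le> err 1 \<nu>\<^sub>0 h + err 1 \<nu>\<^sub>1 h" .
  have "ennreal (1/2 * \<bar>a - b\<bar>\<^sup>2) \<le> ennreal ((a - c)\<^sup>2 + (b - c)\<^sup>2)"
    using half_sq_diff_le_sum_sq_dist[of a b c] by (intro ennreal_leI) simp
  also have "\<dots> = ennreal ((a - c)\<^sup>2) + ennreal ((b - c)\<^sup>2)"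
    by (simp add: ennreal_plus)
  also have "\<dots> \<le> (err 2 \<nu>\<^sub>0 h)\<^sup>2 + (err 2 \<nu>\<^sub>1 h)\<^sup>2"
    using sq_mean_gap_le_err_2[OF assms(1-3)] sq_mean_gap_le_err_2[OF assms(4-6)] same_mean
    unfolding a_def b_def c_def by (intro add_mono) simp_all
  finally show "ennreal (1/2 * \<bar>a - b\<bar>\<^sup>2) \<le> (err 2 \<nu>\<^sub>0 h)\<^sup>2 + (err 2 \<nu>\<^sub>1 h)\<^sup>2" .
qed

lemma (in prob_space) distr_uniform_measure_indep_event:
  assumes indep: "indep_var N G T A" and B: "B \<in> sets T"
    and pos: "prob (A -` B \<inter> space M) > 0"
  shows "distr (uniform_measure M (A -` B \<inter> space M)) N G = distr M N G"
proof (rule measure_eqI)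
  show "sets (distr (uniform_measure M (A -` B \<inter> space M)) N G) = sets (distr M N G)"
    by simp
next
  fix C assume "C \<in> sets (distr (uniform_measure M (A -` B \<inter> space M)) N G)"
  then have C: "C \<in> sets N" by simp
  have G: "G \<in> measurable M N" and A: "A \<in> measurable M T"
    using indep_var_rv1[OF indep] indep_var_rv2[OF indep] by auto
  let ?E = "A -` B \<inter> space M" and ?F = "G -` C \<inter> space M"
  have E: "?E \<in> events" and F: "?F \<in> events"
    using measurable_sets[OF A B] measurable_sets[OF G C] by auto
  have "?E \<inter> ?F = (\<lambda>x. (G x, A x)) -` (C \<times> B) \<inter> space M"
    by auto
  then have "prob (?E \<inter> ?F) = prob ?F * prob ?E"
    using indep_varD[OF indep C B] by simp
  then have "emeasure (uniform_measure M ?E) ?F = emeasure M ?F"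
    using pos E F by (simp add: emeasure_eq_measure divide_ennreal)
  then show "emeasure (distr (uniform_measure M ?E) N G) C = emeasure (distr M N G) C"
    using C G by (simp add: emeasure_distr)
qed

lemma (in prob_space) prob_space_uniform_measure_event:
  assumes "S \<in> events" and "prob S > 0"
  shows "prob_space (uniform_measure M S)"
  using assms by (intro prob_space_uniform_measure) (simp_all add: emeasure_eq_measure)

lemma sets_cond_dist [simp, measurable_cong]:
  "sets (cond_dist M X A Y a) = sets (borel \<Otimes>\<^sub>M borel)"
  by (simp add: cond_dist_def)

context
  fixes M :: "'w measure" and X :: "'w \<Rightarrow> 'x::topological_space" and Y :: "'w \<Rightarrow> real"
  assumes X [measurable]: "X \<in> borel_measurable M" and Y [measurable]: "Y \<in> borel_measurable M"
begin

lemma integral_cond_dist: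
  fixes g :: "'x \<times> real \<Rightarrow> real"
  assumes "g \<in> borel_measurable (borel \<Otimes>\<^sub>M borel)"
  shows "(\<integral>z. g z \<partial>cond_dist M X A Y a)
    = (\<integral>w. g (X w, Y w) \<partial>uniform_measure M {w \<in> space M. A w = a})"
  unfolding cond_dist_def using assms by (intro integral_distr) measurable

lemma integrable_cond_dist_iff:
  fixes g :: "'x \<times> real \<Rightarrow> real"
  assumes "g \<in> borel_measurable (borel \<Otimes>\<^sub>M borel)"
  shows "integrable (cond_dist M X A Y a) g
    \<longleftrightarrow> integrable (uniform_measure M {w \<in> space M. A w = a}) (\<lambda>w. g (X w, Y w))"
  unfolding cond_dist_def using assms by (intro integrable_distr_eq) measurable

end

context prob_space
begin

lemma prob_space_uniform_measure_level_set:
  fixes A :: "'a \<Rightarrow> real"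
  assumes [measurable]: "A \<in> borel_measurable M" and "prob {w \<in> space M. A w = a} > 0"
  shows "prob_space (uniform_measure M {w \<in> space M. A w = a})"
  using assms(2) by (intro prob_space_uniform_measure_event) measurable

context
  fixes X :: "'a \<Rightarrow> 'x::topological_space" and A Y :: "'a \<Rightarrow> real" and a :: real
  assumes X [measurable]: "X \<in> borel_measurable M" and A [measurable]: "A \<in> borel_measurable M"
    and Y [measurable]: "Y \<in> borel_measurable M"
    and pos: "prob {w \<in> space M. A w = a} > 0"
begin

lemma prob_space_cond_dist: "prob_space (cond_dist M X A Y a)"
  unfolding cond_dist_def
  by (intro prob_space.prob_space_distr prob_space_uniform_measure_level_set[OF A pos]) measurable

lemma integrable_snd_cond_dist:
  assumes "\<And>w. w \<in> space M \<Longrightarrow> \<bar>Y w\<bar> \<le> B"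
  shows "integrable (cond_dist M X A Y a) snd"
proof -
  interpret U: prob_space "uniform_measure M {w \<in> space M. A w = a}"
    by (rule prob_space_uniform_measure_level_set[OF A pos])
  have "integrable (uniform_measure M {w \<in> space M. A w = a}) Y"
    using assms by (intro U.integrable_const_bound[where B = B]) auto
  then show ?thesis
    by (simp add: integrable_cond_dist_iff[OF X Y])
qed

lemma integral_predictor_cond_dist_indep:
  fixes h :: "'x \<Rightarrow> real"
  assumes [measurable]: "h \<in> borel_measurable borel"
    and indep: "indep_var borel (\<lambda>w. h (X w)) borel A"
  shows "(\<integral>z. h (fst z) \<partial>cond_dist M X A Y a) = expectation (\<lambda>w. h (X w))"
proof -
  let ?E = "A -` {a} \<inter> space M"
  have E: "{w \<in> space M. A w = a} = ?E"
    by auto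
  have "(\<integral>z. h (fst z) \<partial>cond_dist M X A Y a) = (\<integral>w. h (X w) \<partial>uniform_measure M ?E)"
    by (simp add: integral_cond_dist[OF X Y] E)
  also have "\<dots> = (\<integral>x. x \<partial>distr (uniform_measure M ?E) borel (\<lambda>w. h (X w)))"
    by (simp add: integral_distr)
  also have "\<dots> = (\<integral>x. x \<partial>distr M borel (\<lambda>w. h (X w)))"
    using distr_uniform_measure_indep_event[OF indep _ pos[unfolded E]] by simp
  also have "\<dots> = expectation (\<lambda>w. h (X w))"
    by (simp add: integral_distr)
  finally show ?thesis .
qed

end

end

theorem corollary1:
  fixes M :: "'w measure"
    and X :: "'w \<Rightarrow> real ^ 'd"
    and A :: "'w \<Rightarrow> real"
    and Y :: "'w \<Rightarrow> real"
    and h :: "real ^ 'd \<Rightarrow> real"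
  assumes "prob_space M"
    and "X \<in> borel_measurable M"
    and "A \<in> borel_measurable M"
    and "Y \<in> borel_measurable M"
    and "\<And>w. w \<in> space M \<Longrightarrow> A w \<in> {0, 1}"
    and "\<And>w. w \<in> space M \<Longrightarrow> \<bar>Y w\<bar> \<le> 1"
    and "measure M {w \<in> space M. A w = 0} > 0"
    and "measure M {w \<in> space M. A w = 1} > 0"
    and "h \<in> borel_measurable borel"
    and "prob_space.indep_var M (borel :: real measure) (\<lambda>w. h (X w)) (borel :: real measure) A"
  shows "(err 1 (cond_dist M X A Y 0) h + err 1 (cond_dist M X A Y 1) h
           \<ge> ennreal \<bar>(\<integral>z. snd z \<partial>cond_dist M X A Y 0) - (\<integral>z. snd z \<partial>cond_dist M X A Y 1)\<bar>)
         \<and> ((err 2 (cond_dist M X A Y 0) h)\<^sup>2 + (err 2 (cond_dist M X A Y 1) h)\<^sup>2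
           \<ge> ennreal (1/2 * \<bar>(\<integral>z. snd z \<partial>cond_dist M X A Y 0) - (\<integral>z. snd z \<partial>cond_dist M X A Y 1)\<bar>\<^sup>2))"
proof -
  interpret M: prob_space M by fact
  note [measurable] = assms(2,3,4,9)
  have h_fst_meas: "(\<lambda>z. h (fst z)) \<in> borel_measurable (cond_dist M X A Y a)" for a
    by measurable
  have cond: "prob_space (cond_dist M X A Y a)" "integrable (cond_dist M X A Y a) snd"
    "(\<integral>z. h (fst z) \<partial>cond_dist M X A Y a) = M.expectation (\<lambda>w. h (X w))"
    if "measure M {w \<in> space M. A w = a} > 0" for a
    using M.prob_space_cond_dist[OF assms(2-4) that]
      M.integrable_snd_cond_dist[OF assms(2-4) that assms(6)]
      M.integral_predictor_cond_dist_indep[OF assms(2-4) that assms(9,10)]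
    by blast+
  show ?thesis
    using mean_gap_le_err_sum[OF cond(1,2)[OF assms(7)] h_fst_meas cond(1,2)[OF assms(8)] h_fst_meas]
      cond(3)[OF assms(7)] cond(3)[OF assms(8)]
    by simp
qed

end
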